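(* Let $S\subseteq\mathbb N^d$ be a good semigroup, $E\subsetneq S$ a proper good ideal, and $A=S\setminus E=\bigcup_{i=1}^NA_i$ its partition into levels. Let $\boldsymbol\alpha\in\mathbb N^d$ and suppose $\Delta^S(\boldsymbol\alpha)$ is nonempty and contained in $A$. Then all minimal elements of $\Delta^S(\boldsymbol\alpha)$ (with respect to the componentwise order) lie in the same level.
   Context: Notation: on $\mathbb{Z}^d$, $\le$ componentwise, $\boldsymbol\alpha\ll\boldsymbol\beta$ means $\alpha_i<\beta_i$ for all $i$, $\boldsymbol\alpha\le\le\boldsymbol\beta$ means $=$ or $\ll$, $\wedge$ componentwise minimum, $I=\{1,\dots,d\}$. $\Delta^S_F(\boldsymbol\alpha)=\{\boldsymbol\beta\in S:\beta_i=\alpha_i\ (i\in F),\ \beta_j>\alpha_j\ (j\notin F)\}$, $\Delta^S_i=\Delta^S_{\{i\}}$, $\Delta^S(\boldsymbol\alpha)=\bigcup_{i=1}^d\Delta^S_i(\boldsymbol\alpha)$. A good semigroup is a submonoid $S$ of $(\mathbb{N}^d,+)$ closed under $\wedge$ (G1), satisfying (G2): if $\boldsymbol\alpha\neq\boldsymbol\beta\in S$ and $\alpha_i=\beta_i$, there is $\boldsymbol\epsilon\in S$ with $\epsilon_i>\alpha_i$, $\epsilon_j\ge\min\{\alpha_j,\beta_j\}$ for $j\ne i$, with equality if $\alpha_j\ne\beta_j$; and (G3): $\boldsymbol c+\mathbb N^d\subseteq S$ for some $\boldsymbol c$. A good ideal is $E\subseteq S$ with $E+S\subseteq E$ satisfying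 (G1)–(G3). Levels: $\boldsymbol\alpha\in B$ is a complete infimum of $\boldsymbol\beta^{(1)},\dots,\boldsymbol\beta^{(r)}\in B$ ($r\ge2$) if $\boldsymbol\beta^{(j)}\in\Delta^S_{F_j}(\boldsymbol\alpha)$ with $\emptyset\ne F_j\subsetneq I$, $\boldsymbol\beta^{(j)}\wedge\boldsymbol\beta^{(k)}=\boldsymbol\alpha$ ($j\ne k$), $\bigcap F_j=\emptyset$. $B^{(1)}$ = maximal elements of $A$ for $\le\le$, $C^{(1)}$ = those that are complete infima of $r$ elements of $B^{(1)}$ ($1<r\le d$), $D^{(1)}=B^{(1)}\setminus C^{(1)}$; inductively for $A\setminus\bigcup_{j<i}D^{(j)}$; $A=\bigsqcup_{i=1}^ND^{(i)}$, $A_i=D^{(N+1-i)}$. *)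

theory Defs
  imports Main
begin

text \<open>Elements of N^d are functions from a finite index type 'i (so I = UNIV, d = CARD('i))
  to nat. The order \<le> on such functions is componentwise.\<close>

definition vadd :: "('i \<Rightarrow> nat) \<Rightarrow> ('i \<Rightarrow> nat) \<Rightarrow> ('i \<Rightarrow> nat)" where
  "vadd a b = (\<lambda>i. a i + b i)"

definition vmin :: "('i \<Rightarrow> nat) \<Rightarrow> ('i \<Rightarrow> nat) \<Rightarrow> ('i \<Rightarrow> nat)" where
  "vmin a b = (\<lambda>i. min (a i) (b i))"

definition sll :: "('i \<Rightarrow> nat) \<Rightarrow> ('i \<Rightarrow> nat) \<Rightarrow> bool" where
  "sll a b \<longleftrightarrow> (\<forall>i. a i < b i)"

definition G1 :: "('i \<Rightarrow> nat) set \<Rightarrow> bool" where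
  "G1 X \<longleftrightarrow> (\<forall>a\<in>X. \<forall>b\<in>X. vmin a b \<in> X)"

definition G2 :: "('i \<Rightarrow> nat) set \<Rightarrow> bool" where
  "G2 X \<longleftrightarrow> (\<forall>a\<in>X. \<forall>b\<in>X. \<forall>i. a \<noteq> b \<and> a i = b i \<longrightarrow>
     (\<exists>e\<in>X. e i > a i \<and> (\<forall>j. j \<noteq> i \<longrightarrow> e j \<ge> min (a j) (b j)) \<and>
        (\<forall>j. j \<noteq> i \<and> a j \<noteq> b j \<longrightarrow> e j = min (a j) (b j))))"

definition G3 :: "('i \<Rightarrow> nat) set \<Rightarrow> bool" where
  "G3 X \<longleftrightarrow> (\<exists>c. \<forall>v. c \<le> v \<longrightarrow> v \<in> X)"

definition good_semigroup :: "('i \<Rightarrow> nat) set \<Rightarrow> bool" where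
  "good_semigroup S \<longleftrightarrow> (\<lambda>_. 0) \<in> S \<and> (\<forall>a\<in>S. \<forall>b\<in>S. vadd a b \<in> S) \<and> G1 S \<and> G2 S \<and> G3 S"

definition good_ideal :: "('i \<Rightarrow> nat) set \<Rightarrow> ('i \<Rightarrow> nat) set \<Rightarrow> bool" where
  "good_ideal S E \<longleftrightarrow> E \<subseteq> S \<and> (\<forall>a\<in>E. \<forall>s\<in>S. vadd a s \<in> E) \<and> G1 E \<and> G2 E \<and> G3 E"

definition DeltaF :: "('i \<Rightarrow> nat) set \<Rightarrow> 'i set \<Rightarrow> ('i \<Rightarrow> nat) \<Rightarrow> ('i \<Rightarrow> nat) set" where
  "DeltaF S F a = {b\<in>S. (\<forall>i\<in>F. b i = a i) \<and> (\<forall>j. j \<notin> F \<longrightarrow> b j > a j)}"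

definition Delta :: "('i \<Rightarrow> nat) set \<Rightarrow> ('i \<Rightarrow> nat) \<Rightarrow> ('i \<Rightarrow> nat) set" where
  "Delta S a = (\<Union>i. DeltaF S {i} a)"

text \<open>Maximal elements for the order \<le>\<le> (= or \<ll>).\<close>
definition maxll :: "('i \<Rightarrow> nat) set \<Rightarrow> ('i \<Rightarrow> nat) set" where
  "maxll X = {a\<in>X. \<not> (\<exists>b\<in>X. sll a b)}"

text \<open>a is a complete infimum of r elements of B, 1 < r \<le> d. The r elements are
  pairwise distinct (forced by the pairwise-meet condition), so they form a set G;
  F_j is the set of coordinates where the j-th element agrees with a.\<close>
definition complete_infimum :: "('i::finite \<Rightarrow> nat) set \<Rightarrow> ('i \<Rightarrow> nat) set \<Rightarrow> ('i \<Rightarrow> nat) \<Rightarrow> bool" where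
  "complete_infimum S B a \<longleftrightarrow> a \<in> B \<and>
     (\<exists>G. G \<subseteq> B \<and> 2 \<le> card G \<and> card G \<le> card (UNIV :: 'i set) \<and>
        (\<forall>b\<in>G. \<exists>F. F \<noteq> {} \<and> F \<noteq> UNIV \<and> b \<in> DeltaF S F a) \<and>
        (\<forall>b\<in>G. \<forall>b'\<in>G. b \<noteq> b' \<longrightarrow> vmin b b' = a) \<and>
        (\<Inter>b\<in>G. {i. b i = a i}) = {})"

definition level_D :: "('i::finite \<Rightarrow> nat) set \<Rightarrow> ('i \<Rightarrow> nat) set \<Rightarrow> ('i \<Rightarrow> nat) set" where
  "level_D S X = maxll X - {a \<in> maxll X. complete_infimum S (maxll X) a}"

fun remaining :: "('i::finite \<Rightarrow> nat) set \<Rightarrow> ('i \<Rightarrow> nat) set \<Rightarrow> nat \<Rightarrow> ('i \<Rightarrow> nat) set" where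
  "remaining S A 0 = A"
| "remaining S A (Suc n) = remaining S A n - level_D S (remaining S A n)"

text \<open>D^(j) for j \<ge> 1 (the levels A_i are these sets in reverse order).\<close>
definition Dlev :: "('i::finite \<Rightarrow> nat) set \<Rightarrow> ('i \<Rightarrow> nat) set \<Rightarrow> nat \<Rightarrow> ('i \<Rightarrow> nat) set" where
  "Dlev S A j = level_D S (remaining S A (j - 1))"

definition minimal_elems :: "('i \<Rightarrow> nat) set \<Rightarrow> ('i \<Rightarrow> nat) set" where
  "minimal_elems X = {a\<in>X. \<not> (\<exists>b\<in>X. b \<le> a \<and> b \<noteq> a)}"

end

theory Submission
  imports Defs
begin

text \<open>
  Let \<open>X \<subseteq> A = S - E\<close> be downward closed in \<open>A\<close>. Then \<open>x \<in> X\<close> survives one peeling step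
  (\<open>x \<notin> level_D S X\<close>) iff for every coordinate \<open>k\<close> some element of \<open>X\<close> lies above \<open>x\<close>
  and is strictly larger at \<open>k\<close>. One direction is read off the definition of a complete
  infimum. For the other, let \<open>\<mu> k\<close> be the least element of \<open>S\<close> above \<open>x\<close> that is strictly
  larger at \<open>k\<close> (it exists by (G1)). By (G2), two of these that are both strictly larger than
  \<open>x\<close> at a common coordinate coincide, so the \<open>\<mu> k\<close> meet pairwise in \<open>x\<close>; together with one
  element of \<open>X\<close> above \<open>x\<close> they exhibit \<open>x\<close> as a complete infimum.

  Every stage of the peeling is downward closed in \<open>A\<close>, so this applies at each stage. If a
  minimal \<open>\<beta> \<in> \<Delta>\<^sub>i(\<alpha>)\<close> survives stage \<open>n\<close>, the element \<open>b\<close> witnessing this at coordinate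
  \<open>i\<close> satisfies \<open>\<alpha> \<ll> b\<close>, so every other minimal \<open>\<gamma> \<in> \<Delta>\<^sub>j(\<alpha>)\<close> lies below \<open>b\<close>; an
  induction on the stage, using (G2) inside \<open>\<Delta>\<^sub>j(\<alpha>)\<close>, shows that \<open>\<gamma>\<close> survives as well.
  Since \<open>E\<close> contains \<open>c + \<nat>\<^sup>d\<close>, every element leaves after finitely many steps, and
  \<open>\<beta>\<close>, \<open>\<gamma>\<close> leave at the same step, i.e. lie in the same level.
\<close>

lemma vmin_apply [simp]: "vmin a b i = min (a i) (b i)"
  by (simp add: vmin_def)

lemma vmin_closed_has_least:
  fixes T :: "('i::finite \<Rightarrow> nat) set"
  assumes "y0 \<in> T" and closed: "\<And>a b. a \<in> T \<Longrightarrow> b \<in> T \<Longrightarrow> vmin a b \<in> T"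
  obtains m where "m \<in> T" "\<And>y. y \<in> T \<Longrightarrow> m \<le> y"
proof -
  define weight :: "('i \<Rightarrow> nat) \<Rightarrow> nat" where "weight y = (\<Sum>i\<in>UNIV. y i)" for y
  obtain m where m: "m \<in> T" and m_least: "\<And>y. y \<in> T \<Longrightarrow> weight m \<le> weight y"
    using ex_has_least_nat[of "\<lambda>y. y \<in> T" y0 weight] \<open>y0 \<in> T\<close> by blast
  have "m \<le> y" if "y \<in> T" for y
  proof (rule le_funI)
    fix i
    have "vmin m y \<in> T" using closed m that .
    then have "weight m \<le> weight (vmin m y)" by (rule m_least)
    moreover have "weight (vmin m y) \<le> weight m"
      unfolding weight_def by (intro sum_mono) simp
    ultimately have "(\<Sum>i\<in>UNIV. vmin m y i) = (\<Sum>i\<in>UNIV. m i)"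
      unfolding weight_def by (rule antisym[rotated])
    from sum_mono_inv[OF this] have "vmin m y i = m i" by simp
    then show "m i \<le> y i" by simp
  qed
  with m that show ?thesis by blast
qed

definition strictly_above :: "('i \<Rightarrow> nat) set \<Rightarrow> ('i \<Rightarrow> nat) \<Rightarrow> 'i \<Rightarrow> ('i \<Rightarrow> nat) set" where
  "strictly_above X x k = {y \<in> X. x \<le> y \<and> x k < y k}"

definition exceeded_in :: "('i \<Rightarrow> nat) set \<Rightarrow> ('i \<Rightarrow> nat) \<Rightarrow> bool" where
  "exceeded_in X x \<longleftrightarrow> (\<forall>k. strictly_above X x k \<noteq> {})"

lemma strictly_above_mono: "X \<subseteq> Y \<Longrightarrow> strictly_above X x k \<subseteq> strictly_above Y x k"
  by (auto simp: strictly_above_def)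

lemma strictly_above_antimono:
  assumes "y \<le> z"
  shows "strictly_above X z k \<subseteq> strictly_above X y k"
proof
  fix b assume "b \<in> strictly_above X z k"
  then have "b \<in> X" "z \<le> b" "z k < b k" by (auto simp: strictly_above_def)
  moreover have "y k \<le> z k" using assms by (simp add: le_fun_def)
  ultimately show "b \<in> strictly_above X y k"
    using assms by (auto simp: strictly_above_def intro: order_trans)
qed

lemma exceeded_in_antimono: "exceeded_in X z \<Longrightarrow> y \<le> z \<Longrightarrow> exceeded_in X y"
  unfolding exceeded_in_def by (metis strictly_above_antimono subset_empty)

lemma exceeded_in_if_above:
  assumes "q \<in> X" "p \<le> q" "\<And>k. p k = q k \<Longrightarrow> strictly_above X p k \<noteq> {}"
  shows "exceeded_in X p"
proof -
  have "strictly_above X p k \<noteq> {}" for k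
  proof (cases "p k = q k")
    case False
    with \<open>p \<le> q\<close> have "p k < q k" by (simp add: le_fun_def order.not_eq_order_implies_strict)
    with assms(1,2) show ?thesis by (auto simp: strictly_above_def)
  qed (fact assms(3))
  then show ?thesis by (simp add: exceeded_in_def)
qed

lemma maxll_upward:
  assumes "x \<in> maxll X" "y \<in> X" "x \<le> y"
  shows "y \<in> maxll X"
proof -
  have "\<not> sll y w" if "w \<in> X" for w
  proof
    assume "sll y w"
    with \<open>x \<le> y\<close> have "sll x w" unfolding sll_def le_fun_def using le_less_trans by blast
    with assms(1) that show False by (auto simp: maxll_def)
  qed
  with assms(2) show ?thesis by (simp add: maxll_def)
qed

lemma exceeded_in_if_not_level_D:
  assumes "x \<in> X" and "x \<notin> level_D S X"
  shows "exceeded_in X x"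
proof (cases "x \<in> maxll X")
  case True
  with assms have "complete_infimum S (maxll X) x" by (simp add: level_D_def)
  then obtain G where G_max: "G \<subseteq> maxll X"
    and G_faces: "\<forall>b\<in>G. \<exists>F. F \<noteq> {} \<and> F \<noteq> UNIV \<and> b \<in> DeltaF S F x"
    and G_cover: "(\<Inter>b\<in>G. {i. b i = x i}) = {}"
    unfolding complete_infimum_def by blast
  have "strictly_above X x k \<noteq> {}" for k
  proof -
    obtain b where b: "b \<in> G" "b k \<noteq> x k" using G_cover by blast
    with G_faces obtain F where "b \<in> DeltaF S F x" by blast
    then have "x i \<le> b i \<and> (b i \<noteq> x i \<longrightarrow> x i < b i)" for i
      by (cases "i \<in> F") (auto simp: DeltaF_def less_imp_le)
    with b(2) have "x \<le> b" and "x k < b k" by (simp_all add: le_fun_def)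
    moreover have "b \<in> X" using b(1) G_max by (auto simp: maxll_def)
    ultimately show ?thesis by (auto simp: strictly_above_def)
  qed
  then show ?thesis by (simp add: exceeded_in_def)
next
  case False
  with assms obtain b where "b \<in> X" "sll x b" by (auto simp: maxll_def)
  then have "b \<in> strictly_above X x k" for k
    by (auto simp: strictly_above_def sll_def le_fun_def less_imp_le)
  then show ?thesis by (auto simp: exceeded_in_def)
qed

lemma complete_infimum_rangeI:
  fixes g :: "'i::finite \<Rightarrow> 'i \<Rightarrow> nat"
  assumes x_max: "x \<in> maxll X" and "X \<subseteq> S"
    and g_above: "\<And>l. g l \<in> strictly_above X x l"
    and g_disjoint: "\<And>l l' q. x q < g l q \<Longrightarrow> x q < g l' q \<Longrightarrow> g l = g l'"
  shows "complete_infimum S (maxll X) x"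
proof -
  have g_X: "g l \<in> X" and x_le_g: "x \<le> g l" and x_less_g: "x l < g l l" for l
    using g_above[of l] by (auto simp: strictly_above_def)
  have x_le_g': "x i \<le> g l i" for l i using x_le_g by (simp add: le_fun_def)
  have not_sll: "\<not> sll x (g l)" for l using x_max g_X by (auto simp: maxll_def)
  have "range g \<subseteq> maxll X" using maxll_upward[OF x_max g_X x_le_g] by blast
  moreover have "2 \<le> card (range g)"
  proof -
    fix l :: 'i
    from not_sll[of l] obtain q where "\<not> x q < g l q" by (auto simp: sll_def)
    with x_less_g[of q] have "g q \<noteq> g l" by auto
    then have "card {g q, g l} \<le> card (range g)" by (intro card_mono) auto
    with \<open>g q \<noteq> g l\<close> show ?thesis by simp
  qed
  moreover have "card (range g) \<le> card (UNIV :: 'i set)" by (rule card_image_le) simp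
  moreover have "\<exists>F. F \<noteq> {} \<and> F \<noteq> UNIV \<and> g l \<in> DeltaF S F x" for l
  proof (intro exI conjI)
    let ?F = "{i. g l i = x i}"
    show "?F \<noteq> {}"
      using not_sll[of l] x_le_g'[of _ l] unfolding sll_def
      by (metis (mono_tags) empty_Collect_eq le_neq_implies_less)
    show "?F \<noteq> UNIV" using x_less_g[of l] by (metis (mono_tags) UNIV_I mem_Collect_eq less_irrefl)
    show "g l \<in> DeltaF S ?F x"
      using g_X \<open>X \<subseteq> S\<close> x_le_g'[of _ l] by (auto simp: DeltaF_def order.not_eq_order_implies_strict)
  qed
  moreover have "vmin (g l) (g l') = x" if "g l \<noteq> g l'" for l l'
  proof
    fix q
    have "\<not> (x q < g l q \<and> x q < g l' q)" using g_disjoint that by blast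
    then show "vmin (g l) (g l') q = x q" using x_le_g'[of q l] x_le_g'[of q l'] by auto
  qed
  moreover have "(\<Inter>b\<in>range g. {i. b i = x i}) = {}"
  proof -
    have "g q q \<noteq> x q" for q using x_less_g[of q] by simp
    then show ?thesis by blast
  qed
  ultimately show ?thesis
    unfolding complete_infimum_def using x_max by blast
qed

lemma G2_raise_coord:
  assumes "G2 S" "p \<in> S" "q \<in> S" "p \<le> q" "p k = q k" "p j < q j"
  obtains e where "e \<in> S" "p \<le> e" "p k < e k" "e j = p j"
proof -
  have "p \<noteq> q" using \<open>p j < q j\<close> by auto
  then obtain e where "e \<in> S" and e_k: "e k > p k"
    and e_ge: "\<forall>l. l \<noteq> k \<longrightarrow> e l \<ge> min (p l) (q l)"
    and e_eq: "\<forall>l. l \<noteq> k \<and> p l \<noteq> q l \<longrightarrow> e l = min (p l) (q l)"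
    using assms unfolding G2_def by blast
  have p_le_q: "p l \<le> q l" for l using \<open>p \<le> q\<close> by (simp add: le_fun_def)
  have "p l \<le> e l" for l
    using e_k e_ge p_le_q[of l] by (cases "l = k") (auto simp: min_def)
  moreover have "e j = p j"
    using e_eq assms(5,6) p_le_q[of j] by (metis min.absorb1 less_irrefl)
  ultimately show ?thesis using that \<open>e \<in> S\<close> e_k by (simp add: le_fun_def)
qed

lemma DeltaF_singleton_upward:
  assumes "p \<in> DeltaF S {j} \<alpha>" "e \<in> S" "p \<le> e" "e j = \<alpha> j"
  shows "e \<in> DeltaF S {j} \<alpha>"
  using assms by (auto simp: DeltaF_def le_fun_def intro: less_le_trans)

lemma DeltaF_singleton_sll:
  assumes "p \<in> DeltaF S {j} \<alpha>" "p \<le> c" "\<alpha> j < c j"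
  shows "sll \<alpha> c"
  unfolding sll_def
proof
  fix i
  show "\<alpha> i < c i"
  proof (cases "i = j")
    case False
    with assms(1) have "\<alpha> i < p i" by (simp add: DeltaF_def)
    also have "p i \<le> c i" using assms(2) by (simp add: le_fun_def)
    finally show ?thesis .
  qed (use assms(3) in simp)
qed

lemma DeltaF_singleton_raise:
  assumes "G2 S" "p \<in> DeltaF S {j} \<alpha>" "q \<in> S" "p \<le> q" "\<alpha> j < q j" "p k = q k"
  obtains e where "e \<in> DeltaF S {j} \<alpha>" "p \<le> e" "p k < e k"
proof -
  have "p \<in> S" and "p j = \<alpha> j" using assms(2) by (auto simp: DeltaF_def)
  moreover from this assms(5) have "p j < q j" by simp
  ultimately obtain e where "e \<in> S" "p \<le> e" "p k < e k" "e j = \<alpha> j"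
    using G2_raise_coord[OF assms(1) _ assms(3,4,6)] by metis
  with assms(2) show ?thesis by (intro that[of e]) (auto intro: DeltaF_singleton_upward)
qed

lemma remaining_subset: "remaining S A n \<subseteq> A"
  by (induction n) auto

lemma remaining_bound:
  fixes S E :: "('i::finite \<Rightarrow> nat) set"
  assumes c_E: "\<And>v. c \<le> v \<Longrightarrow> v \<in> E"
  shows "x \<in> remaining S (S - E) n \<Longrightarrow> n \<le> (\<Sum>i\<in>UNIV. c i - x i)"
proof (induction n arbitrary: x)
  case 0
  then show ?case by simp
next
  case (Suc n)
  let ?R = "remaining S (S - E) n"
  from Suc.prems have "x \<in> ?R" and "x \<notin> level_D S ?R" by simp_all
  then have "exceeded_in ?R x" by (rule exceeded_in_if_not_level_D)
  have "x \<notin> E" using \<open>x \<in> ?R\<close> remaining_subset by blast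
  with c_E have "\<not> c \<le> x" by blast
  then obtain k where "x k < c k" by (auto simp: le_fun_def not_le)
  moreover from \<open>exceeded_in ?R x\<close> obtain b where "b \<in> ?R" "x \<le> b" "x k < b k"
    by (auto simp: exceeded_in_def strictly_above_def)
  ultimately have "(\<Sum>i\<in>UNIV. c i - b i) < (\<Sum>i\<in>UNIV. c i - x i)"
    by (intro sum_strict_mono_ex1 bexI[of _ k]) (auto simp: le_fun_def diff_le_mono2)
  moreover have "n \<le> (\<Sum>i\<in>UNIV. c i - b i)" using Suc.IH \<open>b \<in> ?R\<close> .
  ultimately show ?case by simp
qed

lemma leaves_remaining:
  fixes S E :: "('i::finite \<Rightarrow> nat) set"
  assumes "G3 E" and "x \<in> S - E"
  obtains n where "x \<in> remaining S (S - E) n" and "x \<notin> remaining S (S - E) (Suc n)"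
proof -
  obtain c where c_E: "\<And>v. c \<le> v \<Longrightarrow> v \<in> E" using assms(1) by (auto simp: G3_def)
  let ?N = "Suc (\<Sum>i\<in>UNIV. c i - x i)"
  have "x \<notin> remaining S (S - E) ?N"
  proof
    assume "x \<in> remaining S (S - E) ?N"
    from remaining_bound[where c = c, OF c_E this] show False by simp
  qed
  moreover have "x \<in> remaining S (S - E) 0" using assms(2) by simp
  ultimately show ?thesis
    using ex_least_nat_less[of "\<lambda>m. x \<notin> remaining S (S - E) m" ?N] that by blast
qed

lemma Dlev_Suc_iff:
  "x \<in> Dlev S A (Suc n) \<longleftrightarrow> x \<in> remaining S A n \<and> x \<notin> remaining S A (Suc n)"
  by (auto simp: Dlev_def level_D_def maxll_def)

locale good_pair =
  fixes S E :: "('i::finite \<Rightarrow> nat) set"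
  assumes G1_S: "G1 S" and G2_S: "G2 S" and G1_E: "G1 E"
begin

lemma vmin_in_S: "a \<in> S \<Longrightarrow> b \<in> S \<Longrightarrow> vmin a b \<in> S"
  using G1_S by (simp add: G1_def)

lemma vmin_DeltaF_singleton:
  assumes "e \<in> DeltaF S {j} \<alpha>" "c \<in> S" "sll \<alpha> c"
  shows "vmin c e \<in> DeltaF S {j} \<alpha>"
  using assms vmin_in_S by (auto simp: DeltaF_def sll_def)

lemma least_strictly_above_choice:
  assumes "\<And>k. strictly_above S x k \<noteq> {}"
  obtains \<mu> where "\<And>k. \<mu> k \<in> strictly_above S x k"
    and "\<And>k y. y \<in> strictly_above S x k \<Longrightarrow> \<mu> k \<le> y"
proof -
  have "vmin a b \<in> strictly_above S x k"
    if "a \<in> strictly_above S x k" "b \<in> strictly_above S x k" for a b k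
    using that vmin_in_S by (auto simp: strictly_above_def le_fun_def)
  then have "\<forall>k. \<exists>m \<in> strictly_above S x k. \<forall>y \<in> strictly_above S x k. m \<le> y"
    using assms by (metis equals0I vmin_closed_has_least)
  with that show ?thesis by (metis bchoice UNIV_I)
qed

context
  fixes x :: "'i \<Rightarrow> nat" and \<mu> :: "'i \<Rightarrow> 'i \<Rightarrow> nat"
  assumes x_S: "x \<in> S"
    and \<mu>_above: "\<And>k. \<mu> k \<in> strictly_above S x k"
    and \<mu>_least: "\<And>k y. y \<in> strictly_above S x k \<Longrightarrow> \<mu> k \<le> y"
begin

lemma least_strictly_above_eq:
  assumes "x p < \<mu> l p"
  shows "\<mu> p = \<mu> l"
proof -
  have \<mu>_S: "\<mu> k \<in> S" and x_le_\<mu>: "x \<le> \<mu> k" and x_less_\<mu>: "x k < \<mu> k k" for k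
    using \<mu>_above[of k] by (auto simp: strictly_above_def)
  have "\<mu> l \<in> strictly_above S x p" using \<mu>_S x_le_\<mu> assms by (simp add: strictly_above_def)
  then have p_le_l: "\<mu> p \<le> \<mu> l" by (rule \<mu>_least)
  show ?thesis
  proof (cases "x l < \<mu> p l")
    case True
    then have "\<mu> p \<in> strictly_above S x l" using \<mu>_S x_le_\<mu> by (simp add: strictly_above_def)
    then have "\<mu> l \<le> \<mu> p" by (rule \<mu>_least)
    with p_le_l show ?thesis by simp
  next
    case False
    moreover have "x l \<le> \<mu> p l" using x_le_\<mu> by (simp add: le_fun_def)
    ultimately have "x l = \<mu> p l" by simp
    then obtain e where "e \<in> S" "x \<le> e" "x l < e l" and e_p: "e p = x p"
      using G2_raise_coord[OF G2_S x_S \<mu>_S x_le_\<mu> _ x_less_\<mu>] by blast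
    then have "\<mu> l \<le> e" by (intro \<mu>_least) (simp add: strictly_above_def)
    with p_le_l have "\<mu> p \<le> e" by (rule order_trans)
    then have "\<mu> p p \<le> e p" by (simp add: le_fun_def)
    with e_p x_less_\<mu>[of p] show ?thesis by simp
  qed
qed

lemma least_strictly_above_propagates:
  assumes "x q < \<mu> l q" and "b \<in> strictly_above S x q"
  shows "b \<in> strictly_above S x l"
proof -
  have "\<mu> l \<le> b" using \<mu>_least[OF assms(2)] least_strictly_above_eq[OF assms(1)] by simp
  with \<mu>_above[of l] assms(2) show ?thesis
    by (auto simp: strictly_above_def le_fun_def intro: less_le_trans)
qed

lemma least_strictly_above_meet:
  assumes "c \<in> strictly_above S x k" and "c l = x l"
  shows "vmin (\<mu> l) (\<mu> k) = x"
proof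
  fix q
  have x_le_\<mu>: "x q \<le> \<mu> i q" for i using \<mu>_above[of i] by (simp add: strictly_above_def le_fun_def)
  have "\<not> (x q < \<mu> l q \<and> x q < \<mu> k q)"
  proof
    assume q: "x q < \<mu> l q \<and> x q < \<mu> k q"
    have "\<mu> k \<le> c" using assms(1) by (rule \<mu>_least)
    with q assms(1) have "c \<in> strictly_above S x q"
      by (auto simp: strictly_above_def le_fun_def intro: less_le_trans)
    with q have "c \<in> strictly_above S x l" by (blast intro: least_strictly_above_propagates)
    with assms(2) show False by (simp add: strictly_above_def)
  qed
  with x_le_\<mu>[of l] x_le_\<mu>[of k] show "vmin (\<mu> l) (\<mu> k) q = x q" by auto
qed

end

lemma complete_infimum_if_exceeded_in:
  assumes X_A: "X \<subseteq> S - E"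
    and X_down: "\<And>z y. z \<in> X \<Longrightarrow> y \<in> S - E \<Longrightarrow> y \<le> z \<Longrightarrow> y \<in> X"
    and x_max: "x \<in> maxll X" and x_exc: "exceeded_in X x"
  shows "complete_infimum S (maxll X) x"
proof -
  have "x \<in> X" using x_max by (simp add: maxll_def)
  with X_A have x_S: "x \<in> S" and x_E: "x \<notin> E" by auto
  have X_above: "strictly_above X x k \<noteq> {}" for k using x_exc by (simp add: exceeded_in_def)
  have above_S: "strictly_above X x k \<subseteq> strictly_above S x k" for k
    using X_A by (intro strictly_above_mono) blast
  with X_above obtain \<mu> where \<mu>_above: "\<And>k. \<mu> k \<in> strictly_above S x k"
    and \<mu>_least: "\<And>k y. y \<in> strictly_above S x k \<Longrightarrow> \<mu> k \<le> y"
    using least_strictly_above_choice by blast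
  note \<mu>_facts = x_S \<mu>_above \<mu>_least
  \<comment> \<open>If some \<open>\<mu> k\<close> lies in \<open>E\<close>, so does \<open>\<mu> k\<^sub>0\<close>; by \<open>least_strictly_above_meet\<close>
    and (G1) for \<open>E\<close>, this keeps every \<open>\<mu> l\<close> with \<open>c l = x l\<close> out of \<open>E\<close>.\<close>
  obtain k\<^sub>0 where k\<^sub>0: "(\<exists>k. \<mu> k \<in> E) \<longrightarrow> \<mu> k\<^sub>0 \<in> E" by blast
  obtain c where c: "c \<in> strictly_above X x k\<^sub>0" using X_above by blast
  have \<mu>_X: "\<mu> l \<in> X" if "c l = x l" for l
  proof -
    have "vmin (\<mu> l) (\<mu> k\<^sub>0) = x"
      using c above_S that by (blast intro: least_strictly_above_meet[OF \<mu>_facts])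
    with G1_E x_E k\<^sub>0 have "\<mu> l \<notin> E" by (metis G1_def)
    moreover obtain w where w: "w \<in> strictly_above X x l" using X_above by blast
    then have "\<mu> l \<le> w" using above_S by (blast intro: \<mu>_least)
    moreover have "w \<in> X" using w by (simp add: strictly_above_def)
    ultimately show ?thesis using X_down \<mu>_above[of l] by (auto simp: strictly_above_def)
  qed
  have c_exceeds: "x l < c l" if "x q < \<mu> l q" "x q < c q" for l q
    using c above_S that least_strictly_above_propagates[OF \<mu>_facts that(1)]
    by (auto simp: strictly_above_def)
  define g where "g l = (if x l < c l then c else \<mu> l)" for l
  show ?thesis
  proof (rule complete_infimum_rangeI[OF x_max])
    show "X \<subseteq> S" using X_A by blast
    show "g l \<in> strictly_above X x l" for l
    proof (cases "x l < c l")
      case False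
      moreover have "x l \<le> c l" using c by (simp add: strictly_above_def le_fun_def)
      ultimately show ?thesis using \<mu>_X[of l] \<mu>_above[of l] by (simp add: g_def strictly_above_def)
    qed (use c in \<open>simp add: g_def strictly_above_def\<close>)
    show "g l = g l'" if "x q < g l q" "x q < g l' q" for l l' q
      using that c_exceeds[of q l] c_exceeds[of q l'] least_strictly_above_eq[OF \<mu>_facts, of q l]
        least_strictly_above_eq[OF \<mu>_facts, of q l']
      by (auto simp: g_def split: if_splits)
  qed
qed

lemma not_level_D_iff_exceeded_in:
  assumes "X \<subseteq> S - E"
    and "\<And>z y. z \<in> X \<Longrightarrow> y \<in> S - E \<Longrightarrow> y \<le> z \<Longrightarrow> y \<in> X"
    and "x \<in> X"
  shows "x \<notin> level_D S X \<longleftrightarrow> exceeded_in X x"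
proof
  assume "x \<notin> level_D S X"
  with assms(3) show "exceeded_in X x" by (rule exceeded_in_if_not_level_D)
next
  assume "exceeded_in X x"
  have "complete_infimum S (maxll X) x" if "x \<in> maxll X"
    by (rule complete_infimum_if_exceeded_in[OF assms(1) _ that \<open>exceeded_in X x\<close>])
      (fact assms(2))
  then show "x \<notin> level_D S X" by (auto simp: level_D_def)
qed

lemma remaining_down_closed:
  "z \<in> remaining S (S - E) n \<Longrightarrow> y \<in> S - E \<Longrightarrow> y \<le> z \<Longrightarrow> y \<in> remaining S (S - E) n"
proof (induction n arbitrary: z y)
  case 0
  then show ?case by simp
next
  case (Suc n)
  let ?R = "remaining S (S - E) n"
  from Suc.prems(1) have "z \<in> ?R" and "z \<notin> level_D S ?R" by simp_all
  then have "exceeded_in ?R z" by (rule exceeded_in_if_not_level_D)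
  then have "exceeded_in ?R y" using Suc.prems(3) by (rule exceeded_in_antimono)
  moreover have "y \<in> ?R" using Suc.IH \<open>z \<in> ?R\<close> Suc.prems(2,3) .
  moreover have "\<And>z y. z \<in> ?R \<Longrightarrow> y \<in> S - E \<Longrightarrow> y \<le> z \<Longrightarrow> y \<in> ?R" by (rule Suc.IH)
  ultimately have "y \<notin> level_D S ?R"
    using not_level_D_iff_exceeded_in[OF remaining_subset] by blast
  with \<open>y \<in> ?R\<close> show ?case by simp
qed

lemma remaining_Suc_iff:
  assumes "x \<in> remaining S (S - E) n"
  shows "x \<in> remaining S (S - E) (Suc n) \<longleftrightarrow> exceeded_in (remaining S (S - E) n) x"
  using not_level_D_iff_exceeded_in[OF remaining_subset remaining_down_closed assms] assms
  by simp

lemma DeltaF_exceeded_in_remaining: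
  assumes face_A: "DeltaF S {j} \<alpha> \<subseteq> S - E"
  shows "p \<in> DeltaF S {j} \<alpha> \<Longrightarrow> q \<in> remaining S (S - E) r \<Longrightarrow> p \<le> q \<Longrightarrow> \<alpha> j < q j
    \<Longrightarrow> exceeded_in (remaining S (S - E) r) p"
proof (induction r arbitrary: p q)
  case 0
  show ?case
  proof (rule exceeded_in_if_above[OF "0.prems"(2,3)])
    fix k assume "p k = q k"
    have "q \<in> S" using "0.prems"(2) remaining_subset by blast
    obtain e where "e \<in> DeltaF S {j} \<alpha>" "p \<le> e" "p k < e k"
      using DeltaF_singleton_raise[OF G2_S "0.prems"(1) \<open>q \<in> S\<close> "0.prems"(3,4) \<open>p k = q k\<close>] .
    with face_A show "strictly_above (remaining S (S - E) 0) p k \<noteq> {}"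
      by (auto simp: strictly_above_def)
  qed
next
  case (Suc r)
  let ?R = "remaining S (S - E) r"
  show ?case
  proof (rule exceeded_in_if_above[OF Suc.prems(2,3)])
    fix k assume "p k = q k"
    have "q \<in> S" using Suc.prems(2) remaining_subset by blast
    obtain e where e: "e \<in> DeltaF S {j} \<alpha>" "p \<le> e" "p k < e k"
      using DeltaF_singleton_raise[OF G2_S Suc.prems(1) \<open>q \<in> S\<close> Suc.prems(3,4) \<open>p k = q k\<close>] .
    have "exceeded_in ?R q" using Suc.prems(2) remaining_Suc_iff by auto
    then obtain c where c: "c \<in> ?R" "q \<le> c" "q k < c k"
      by (auto simp: exceeded_in_def strictly_above_def)
    have "p \<le> c" using \<open>p \<le> q\<close> \<open>q \<le> c\<close> by (rule order_trans)
    moreover have "\<alpha> j < c j" using Suc.prems(4) \<open>q \<le> c\<close> by (simp add: le_fun_def less_le_trans)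
    ultimately have "sll \<alpha> c" by (rule DeltaF_singleton_sll[OF Suc.prems(1)])
    let ?e = "vmin c e"
    have "?e \<le> c" by (simp add: le_fun_def)
    have e_face: "?e \<in> DeltaF S {j} \<alpha>"
      using vmin_DeltaF_singleton[OF e(1) _ \<open>sll \<alpha> c\<close>] c(1) remaining_subset by blast
    with face_A c(1) \<open>?e \<le> c\<close> have "?e \<in> ?R" by (blast intro: remaining_down_closed)
    moreover have "exceeded_in ?R ?e" using Suc.IH[OF e_face c(1) \<open>?e \<le> c\<close> \<open>\<alpha> j < c j\<close>] .
    ultimately have "?e \<in> remaining S (S - E) (Suc r)" using remaining_Suc_iff by blast
    moreover have "p \<le> ?e" and "p k < ?e k"
      using e(2,3) \<open>p \<le> c\<close> \<open>p k = q k\<close> c(3) by (auto simp: le_fun_def)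
    ultimately show "strictly_above (remaining S (S - E) (Suc r)) p k \<noteq> {}"
      by (auto simp: strictly_above_def)
  qed
qed

lemma minimal_Delta_le:
  assumes "\<gamma> \<in> minimal_elems (Delta S \<alpha>)" "b \<in> S" "sll \<alpha> b"
  shows "\<gamma> \<le> b"
proof -
  obtain j where "\<gamma> \<in> DeltaF S {j} \<alpha>" using assms(1) by (auto simp: minimal_elems_def Delta_def)
  from vmin_DeltaF_singleton[OF this assms(2,3)] have "vmin b \<gamma> \<in> Delta S \<alpha>"
    by (auto simp: Delta_def)
  moreover have "vmin b \<gamma> \<le> \<gamma>" by (simp add: le_fun_def)
  ultimately have "vmin b \<gamma> = \<gamma>" using assms(1) by (auto simp: minimal_elems_def)
  then show ?thesis by (metis le_funI min.cobounded1 vmin_apply)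
qed

lemma minimal_Delta_remaining:
  assumes Delta_A: "Delta S \<alpha> \<subseteq> S - E"
    and \<beta>: "\<beta> \<in> minimal_elems (Delta S \<alpha>)" and \<gamma>: "\<gamma> \<in> minimal_elems (Delta S \<alpha>)"
  shows "\<beta> \<in> remaining S (S - E) n \<Longrightarrow> \<gamma> \<in> remaining S (S - E) n"
proof (induction n)
  case 0
  with \<gamma> Delta_A show ?case by (auto simp: minimal_elems_def)
next
  case (Suc n)
  let ?R = "remaining S (S - E) n"
  have "\<beta> \<in> ?R" using Suc.prems by simp
  with Suc.prems have "exceeded_in ?R \<beta>" using remaining_Suc_iff by blast
  obtain i where \<beta>_i: "\<beta> \<in> DeltaF S {i} \<alpha>" using \<beta> by (auto simp: minimal_elems_def Delta_def)
  from \<open>exceeded_in ?R \<beta>\<close> obtain b where b: "b \<in> ?R" "\<beta> \<le> b" "\<beta> i < b i"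
    by (auto simp: exceeded_in_def strictly_above_def)
  from \<beta>_i b(3) have "\<alpha> i < b i" by (simp add: DeltaF_def)
  with \<beta>_i b(2) have "sll \<alpha> b" by (rule DeltaF_singleton_sll)
  then have "\<gamma> \<le> b" using \<gamma> b(1) remaining_subset by (blast intro: minimal_Delta_le)
  obtain j where \<gamma>_j: "\<gamma> \<in> DeltaF S {j} \<alpha>" using \<gamma> by (auto simp: minimal_elems_def Delta_def)
  with Delta_A have "DeltaF S {j} \<alpha> \<subseteq> S - E" by (auto simp: Delta_def)
  from DeltaF_exceeded_in_remaining[OF this \<gamma>_j b(1) \<open>\<gamma> \<le> b\<close>] \<open>sll \<alpha> b\<close>
  have "exceeded_in ?R \<gamma>" by (simp add: sll_def)
  moreover have "\<gamma> \<in> ?R" using Suc.IH \<open>\<beta> \<in> ?R\<close> .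
  ultimately show ?case using remaining_Suc_iff by blast
qed

lemma minimal_Delta_remaining_iff:
  assumes "Delta S \<alpha> \<subseteq> S - E"
    and "\<beta> \<in> minimal_elems (Delta S \<alpha>)" and "\<gamma> \<in> minimal_elems (Delta S \<alpha>)"
  shows "\<beta> \<in> remaining S (S - E) n \<longleftrightarrow> \<gamma> \<in> remaining S (S - E) n"
  using minimal_Delta_remaining[OF assms] minimal_Delta_remaining[OF assms(1,3,2)] by blast

end

theorem lemma2p8:
  fixes S E :: "('i::finite \<Rightarrow> nat) set" and \<alpha> :: "'i \<Rightarrow> nat"
  assumes "good_semigroup S" and "good_ideal S E" and "E \<noteq> S"
    and "Delta S \<alpha> \<noteq> {}" and "Delta S \<alpha> \<subseteq> S - E"
  shows "\<forall>\<beta>\<in>minimal_elems (Delta S \<alpha>). \<forall>\<gamma>\<in>minimal_elems (Delta S \<alpha>).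
           \<exists>j\<ge>1. \<beta> \<in> Dlev S (S - E) j \<and> \<gamma> \<in> Dlev S (S - E) j"
proof (intro ballI)
  fix \<beta> \<gamma>
  assume \<beta>: "\<beta> \<in> minimal_elems (Delta S \<alpha>)" and \<gamma>: "\<gamma> \<in> minimal_elems (Delta S \<alpha>)"
  interpret good_pair S E
    using assms(1,2) by unfold_locales (simp_all add: good_semigroup_def good_ideal_def)
  have "G3 E" using assms(2) by (simp add: good_ideal_def)
  moreover have "\<beta> \<in> S - E" using \<beta> assms(5) by (auto simp: minimal_elems_def)
  ultimately obtain n where "\<beta> \<in> remaining S (S - E) n" "\<beta> \<notin> remaining S (S - E) (Suc n)"
    by (rule leaves_remaining)
  moreover have "\<gamma> \<in> remaining S (S - E) m \<longleftrightarrow> \<beta> \<in> remaining S (S - E) m" for m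
    using minimal_Delta_remaining_iff[OF assms(5) \<gamma> \<beta>] .
  ultimately have "\<beta> \<in> Dlev S (S - E) (Suc n)" and "\<gamma> \<in> Dlev S (S - E) (Suc n)"
    unfolding Dlev_Suc_iff by blast+
  then show "\<exists>j\<ge>1. \<beta> \<in> Dlev S (S - E) j \<and> \<gamma> \<in> Dlev S (S - E) j"
    by (intro exI[of _ "Suc n"]) simp
qed

end
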